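(* Let $r\in\mathbb Z_+$, $\mathfrak B$ a finite-dimensional Banach space, $\mathcal C$ the space of functions $[-r,0]\cap\mathbb Z\to\mathfrak B$ with norm $\|\varphi\|=\sum_{k=0}^r|\varphi(-k)|$, $A:\mathbb Z\to\mathfrak A$ and $f:\mathbb Z\to\mathfrak B$. Let $\psi(t,u,(A,f))$ be a solution of $u(t+1)=A(t)u_t+f(t)$ whose values $\{\psi(t,u,(A,f)):t\in\mathbb Z_+\}$ form a relatively compact set. Then the set $$H^+(u,(A,f)):=\overline{\{(\tilde\psi(\tau,u,(A,f)),(A_\tau,f_\tau)):\ \tau\ge0\}}\subseteq X:=\mathcal C\times H(A,f)$$ is conditionally compact with respect to $(X,h,Y)$, where $Y:=H(A,f)$ and $h:=pr_2:X\to Y$.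
   Context: $\mathfrak A$ is the Banach space of linear operators $\mathcal C\to\mathfrak B$ with operator norm; $C(\mathbb Z,\cdot)$ carries the topology of pointwise (compact-open) convergence. For a function $u$ and integer $t$, $u_t\in\mathcal C$ is $u_t(s)=u(t+s)$, $s\in[-r,0]$. $\psi(t,u,(A,f))$ denotes the solution defined for $t\ge-r$ with $\psi(s)=u(s)$ on $[-r,0]$, and $\tilde\psi(t,u,(A,f))\in\mathcal C$ is $\tilde\psi(t,u,(A,f))(s):=\psi(t+s,u,(A,f))$. $A_\tau(t)=A(t+\tau)$, $f_\tau(t)=f(t+\tau)$, and $H(A,f)$ is the closure of $\{(A_\tau,f_\tau):\tau\in\mathbb Z\}$ in $C(\mathbb Z,\mathfrak A)\times C(\mathbb Z,\mathfrak B)$. A subset $M\subseteq X$ is conditionally compact w.r.t. $(X,h,Y)$ if it is closed and $h^{-1}(Y')\cap M$ is relatively compact for every relatively compact $Y'\subseteq Y$. *)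

theory Defs
  imports "HOL-Analysis.Analysis"
begin

text \<open>Phase space C: functions [-r,0] \<inter> Z \<rightarrow> B, represented as functions int \<Rightarrow> B
  that vanish outside {-r..0}.\<close>
definition Cspace :: "nat \<Rightarrow> (int \<Rightarrow> 'b::euclidean_space) set" where
  "Cspace r = {\<phi>. \<forall>s. s \<notin> {- int r..0} \<longrightarrow> \<phi> s = 0}"

definition Cnorm :: "nat \<Rightarrow> (int \<Rightarrow> 'b::euclidean_space) \<Rightarrow> real" where
  "Cnorm r \<phi> = (\<Sum>k=0..r. norm (\<phi> (- int k)))"

definition Cdist :: "nat \<Rightarrow> (int \<Rightarrow> 'b::euclidean_space) \<Rightarrow> (int \<Rightarrow> 'b) \<Rightarrow> real" where
  "Cdist r \<phi> \<eta> = Cnorm r (\<lambda>s. \<phi> s - \<eta> s)"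

definition Ctop :: "nat \<Rightarrow> (int \<Rightarrow> 'b::euclidean_space) topology" where
  "Ctop r = Metric_space.mtopology (Cspace r) (Cdist r)"

text \<open>The space \<AA> of linear operators C \<rightarrow> B (extensional: zero outside C).\<close>
definition Aspace :: "nat \<Rightarrow> ((int \<Rightarrow> 'b::euclidean_space) \<Rightarrow> 'b) set" where
  "Aspace r = {L. (\<forall>\<phi>\<in>Cspace r. \<forall>\<eta>\<in>Cspace r. L (\<lambda>s. \<phi> s + \<eta> s) = L \<phi> + L \<eta>)
                 \<and> (\<forall>\<phi>\<in>Cspace r. \<forall>c. L (\<lambda>s. c *\<^sub>R \<phi> s) = c *\<^sub>R L \<phi>)
                 \<and> (\<forall>\<phi>. \<phi> \<notin> Cspace r \<longrightarrow> L \<phi> = 0)}"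

definition Adist :: "nat \<Rightarrow> ((int \<Rightarrow> 'b::euclidean_space) \<Rightarrow> 'b) \<Rightarrow> ((int \<Rightarrow> 'b) \<Rightarrow> 'b) \<Rightarrow> real" where
  "Adist r L M = (SUP \<phi>\<in>{\<phi>\<in>Cspace r. Cnorm r \<phi> \<le> 1}. norm (L \<phi> - M \<phi>))"

definition Atop :: "nat \<Rightarrow> ((int \<Rightarrow> 'b::euclidean_space) \<Rightarrow> 'b) topology" where
  "Atop r = Metric_space.mtopology (Aspace r) (Adist r)"

text \<open>Topology of C(Z,\<AA>) \<times> C(Z,B): pointwise convergence.\<close>
definition HullTop :: "nat \<Rightarrow> ((int \<Rightarrow> (int \<Rightarrow> 'b::euclidean_space) \<Rightarrow> 'b) \<times> (int \<Rightarrow> 'b)) topology" where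
  "HullTop r = prod_topology (product_topology (\<lambda>_. Atop r) UNIV) (product_topology (\<lambda>_. euclidean) UNIV)"

definition hull_Af :: "nat \<Rightarrow> (int \<Rightarrow> (int \<Rightarrow> 'b::euclidean_space) \<Rightarrow> 'b) \<Rightarrow> (int \<Rightarrow> 'b)
    \<Rightarrow> ((int \<Rightarrow> (int \<Rightarrow> 'b) \<Rightarrow> 'b) \<times> (int \<Rightarrow> 'b)) set" where
  "hull_Af r A f = (HullTop r) closure_of {((\<lambda>t. A (t + \<tau>)), (\<lambda>t. f (t + \<tau>))) | \<tau>::int. True}"

definition seg :: "nat \<Rightarrow> (int \<Rightarrow> 'b::euclidean_space) \<Rightarrow> int \<Rightarrow> (int \<Rightarrow> 'b)" where
  "seg r u t = (\<lambda>s. if - int r \<le> s \<and> s \<le> 0 then u (t + s) else 0)"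

definition Xtop :: "nat \<Rightarrow> (int \<Rightarrow> (int \<Rightarrow> 'b::euclidean_space) \<Rightarrow> 'b) \<Rightarrow> (int \<Rightarrow> 'b)
    \<Rightarrow> ((int \<Rightarrow> 'b) \<times> ((int \<Rightarrow> (int \<Rightarrow> 'b) \<Rightarrow> 'b) \<times> (int \<Rightarrow> 'b))) topology" where
  "Xtop r A f = prod_topology (Ctop r) (subtopology (HullTop r) (hull_Af r A f))"

definition Ytop :: "nat \<Rightarrow> (int \<Rightarrow> (int \<Rightarrow> 'b::euclidean_space) \<Rightarrow> 'b) \<Rightarrow> (int \<Rightarrow> 'b)
    \<Rightarrow> ((int \<Rightarrow> (int \<Rightarrow> 'b) \<Rightarrow> 'b) \<times> (int \<Rightarrow> 'b)) topology" where
  "Ytop r A f = subtopology (HullTop r) (hull_Af r A f)"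

definition cond_compact :: "'x topology \<Rightarrow> ('x \<Rightarrow> 'y) \<Rightarrow> 'y topology \<Rightarrow> 'x set \<Rightarrow> bool" where
  "cond_compact X h Y M \<longleftrightarrow> closedin X M \<and>
     (\<forall>Y'. Y' \<subseteq> topspace Y \<and> compactin Y (Y closure_of Y') \<longrightarrow>
        compactin X (X closure_of ({x \<in> topspace X. h x \<in> Y'} \<inter> M)))"

definition Hplus :: "nat \<Rightarrow> (int \<Rightarrow> 'b::euclidean_space) \<Rightarrow> (int \<Rightarrow> (int \<Rightarrow> 'b) \<Rightarrow> 'b) \<Rightarrow> (int \<Rightarrow> 'b)
    \<Rightarrow> ((int \<Rightarrow> 'b) \<times> ((int \<Rightarrow> (int \<Rightarrow> 'b) \<Rightarrow> 'b) \<times> (int \<Rightarrow> 'b))) set" where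
  "Hplus r psi A f = (Xtop r A f) closure_of
     {(seg r psi \<tau>, ((\<lambda>t. A (t + \<tau>)), (\<lambda>t. f (t + \<tau>)))) | \<tau>::int. \<tau> \<ge> 0}"

end

theory Submission
  imports Defs
begin

text \<open>The forward orbit of \<open>psi\<close> together with its finitely many initial values has compact
  closure \<open>Q\<close>, so every segment \<open>seg r psi \<tau>\<close>, \<open>\<tau> \<ge> 0\<close>, lies in the set \<open>Cbox r Q\<close> of
  segments with values in \<open>Q\<close>, which is compact as a continuous image of a Tychonoff product.
  Hence \<open>H\<^sup>+\<close> lies in \<open>Cbox r Q \<times> H(A,f)\<close>, and above any set with compact closure \<open>Z\<close> its
  closure is a closed subset of the compact set \<open>Cbox r Q \<times> Z\<close>.\<close>

lemma Metric_space_Cdist: "Metric_space (Cspace r) (Cdist r :: (int \<Rightarrow> 'b::euclidean_space) \<Rightarrow> _)"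
proof
  fix x y z :: "int \<Rightarrow> 'b"
  show "0 \<le> Cdist r x y" by (simp add: Cdist_def Cnorm_def sum_nonneg)
  show "Cdist r x y = Cdist r y x" by (simp add: Cdist_def Cnorm_def norm_minus_commute)
  show "Cdist r x z \<le> Cdist r x y + Cdist r y z"
    unfolding Cdist_def Cnorm_def sum.distrib[symmetric]
    by (rule sum_mono, rule norm_diff_triangle_le) auto
  assume xy: "x \<in> Cspace r" "y \<in> Cspace r"
  show "Cdist r x y = 0 \<longleftrightarrow> x = y"
  proof
    assume "Cdist r x y = 0"
    then have eq: "x (- int k) = y (- int k)" if "k \<le> r" for k
      using that by (simp add: Cdist_def Cnorm_def sum_nonneg_eq_0_iff)
    show "x = y"
    proof
      fix s
      show "x s = y s"
      proof (cases "s \<in> {- int r..0}")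
        case True
        then show ?thesis using eq[of "nat (- s)"] by auto
      next
        case False
        then show ?thesis using xy by (simp add: Cspace_def)
      qed
    qed
  qed (simp add: Cdist_def Cnorm_def)
qed

lemma topspace_Ctop [simp]: "topspace (Ctop r) = Cspace r"
  by (simp add: Ctop_def Metric_space.topspace_mtopology[OF Metric_space_Cdist])

lemma Hausdorff_space_Ctop: "Hausdorff_space (Ctop r)"
  by (simp add: Ctop_def Metric_space.Hausdorff_space_mtopology[OF Metric_space_Cdist])

lemma continuous_map_id_pointwise_Ctop:
  "continuous_map (subtopology (product_topology (\<lambda>_. euclidean) UNIV) (Cspace r)) (Ctop r)
     (id :: (int \<Rightarrow> 'b::euclidean_space) \<Rightarrow> _)"
  unfolding Ctop_def Metric_space.continuous_map_to_metric[OF Metric_space_Cdist]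
proof (intro ballI allI impI)
  let ?P = "subtopology (product_topology (\<lambda>_. euclidean) UNIV) (Cspace r)
              :: (int \<Rightarrow> 'b) topology"
  fix x :: "int \<Rightarrow> 'b" and \<epsilon> :: real
  assume x: "x \<in> topspace ?P" and "\<epsilon> > 0"
  define U where "U = {y \<in> topspace ?P. Cdist r x y \<in> {..<\<epsilon>}}"
  have "continuous_map ?P euclidean (Cdist r x)"
    unfolding Cdist_def Cnorm_def
    by (intro continuous_intros continuous_map_from_subtopology
          continuous_map_product_projection) auto
  then have "openin ?P U"
    unfolding U_def by (rule openin_continuous_map_preimage) simp
  moreover have "x \<in> U"
    using x \<open>\<epsilon> > 0\<close> by (simp add: U_def Cdist_def Cnorm_def)
  moreover have "id y \<in> Metric_space.mball (Cspace r) (Cdist r) (id x) \<epsilon>" if "y \<in> U" for y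
    using that x by (simp add: U_def Metric_space.in_mball[OF Metric_space_Cdist])
  ultimately show "\<exists>U. openin ?P U \<and> x \<in> U \<and>
      (\<forall>y\<in>U. id y \<in> Metric_space.mball (Cspace r) (Cdist r) (id x) \<epsilon>)" by blast
qed

definition Cbox :: "nat \<Rightarrow> 'b set \<Rightarrow> (int \<Rightarrow> 'b::euclidean_space) set" where
  "Cbox r Q = {\<phi> \<in> Cspace r. \<forall>s \<in> {- int r..0}. \<phi> s \<in> Q}"

lemma Cbox_eq_PiE: "Cbox r Q = PiE UNIV (\<lambda>s. if s \<in> {- int r..0} then Q else {0})"
  by (auto simp: Cbox_def Cspace_def PiE_UNIV_domain split: if_splits)

lemma compactin_Cbox:
  assumes "compact Q"
  shows "compactin (Ctop r) (Cbox r Q)"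
proof -
  have "compactin (product_topology (\<lambda>_. euclidean) UNIV) (Cbox r Q)"
    unfolding Cbox_eq_PiE compactin_PiE using assms by auto
  moreover have "Cbox r Q \<subseteq> Cspace r"
    by (auto simp: Cbox_def)
  ultimately have "compactin (subtopology (product_topology (\<lambda>_. euclidean) UNIV) (Cspace r))
                     (Cbox r Q)"
    by (simp add: compactin_subtopology)
  from image_compactin[OF this continuous_map_id_pointwise_Ctop] show ?thesis
    by simp
qed

lemma closedin_Cbox: "compact Q \<Longrightarrow> closedin (Ctop r) (Cbox r Q)"
  by (rule compactin_imp_closedin[OF Hausdorff_space_Ctop compactin_Cbox])

lemma seg_in_Cbox: "psi ` {\<tau> - int r..\<tau>} \<subseteq> Q \<Longrightarrow> seg r psi \<tau> \<in> Cbox r Q"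
  by (force simp: Cbox_def Cspace_def seg_def)

lemma cond_compact_closure_of_prod:
  assumes K: "compactin T K" "closedin T K" and S: "S \<subseteq> K \<times> UNIV"
  shows "cond_compact (prod_topology T Y) snd Y (prod_topology T Y closure_of S)"
  unfolding cond_compact_def
proof (intro conjI allI impI)
  let ?X = "prod_topology T Y"
  let ?M = "?X closure_of S"
  show "closedin ?X ?M" by simp
  have "?M = ?X closure_of (topspace ?X \<inter> S)"
    by (rule closure_of_restrict)
  also have "\<dots> \<subseteq> ?X closure_of (K \<times> topspace Y)"
    using S by (intro closure_of_mono) auto
  also have "\<dots> = K \<times> topspace Y"
    using K by (simp add: closure_of_closedin closedin_prod_Times_iff)
  finally have M: "?M \<subseteq> K \<times> topspace Y" .
  fix Y' assume Y': "Y' \<subseteq> topspace Y \<and> compactin Y (Y closure_of Y')"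
  let ?Z = "Y closure_of Y'"
  have "{x \<in> topspace ?X. snd x \<in> Y'} \<inter> ?M \<subseteq> K \<times> ?Z"
    using M closure_of_subset[of Y' Y] Y' by auto
  moreover have "closedin ?X (K \<times> ?Z)"
    using K by (simp add: closedin_prod_Times_iff)
  ultimately have "?X closure_of ({x \<in> topspace ?X. snd x \<in> Y'} \<inter> ?M) \<subseteq> K \<times> ?Z"
    by (rule closure_of_minimal)
  moreover have "compactin ?X (K \<times> ?Z)"
    using K Y' by (simp add: compactin_Times)
  ultimately show "compactin ?X (?X closure_of ({x \<in> topspace ?X. snd x \<in> Y'} \<inter> ?M))"
    by (intro closed_compactin[OF _ _ closedin_closure_of])
qed

theorem lemmal04p3:
  fixes r :: nat
    and A :: "int \<Rightarrow> (int \<Rightarrow> 'b::euclidean_space) \<Rightarrow> 'b"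
    and f :: "int \<Rightarrow> 'b"
    and u :: "int \<Rightarrow> 'b"
    and psi :: "int \<Rightarrow> 'b"
  assumes A_op: "\<And>t. A t \<in> Aspace r"
    and u_C: "u \<in> Cspace r"
    and init: "\<And>s. - int r \<le> s \<Longrightarrow> s \<le> 0 \<Longrightarrow> psi s = u s"
    and sol: "\<And>t. t \<ge> 0 \<Longrightarrow> psi (t + 1) = A t (seg r psi t) + f t"
    and relcomp: "compact (closure {psi t | t. t \<ge> 0})"
  shows "cond_compact (Xtop r A f) snd (Ytop r A f) (Hplus r psi A f)"
proof -
  define Q where "Q = closure {psi t | t. t \<ge> 0} \<union> psi ` {- int r..0}"
  have Q: "compact Q"
    unfolding Q_def by (intro compact_Un relcomp finite_imp_compact) simp
  have "psi t \<in> Q" if "t \<ge> - int r" for t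
  proof (cases "t \<ge> 0")
    case True
    then have "psi t \<in> {psi t | t. t \<ge> 0}" by blast
    then show ?thesis unfolding Q_def by (intro UnI1 closure_subset[THEN subsetD])
  next
    case False
    with that show ?thesis by (simp add: Q_def)
  qed
  then have "seg r psi \<tau> \<in> Cbox r Q" if "\<tau> \<ge> 0" for \<tau>
    using that by (intro seg_in_Cbox) auto
  then have "{(seg r psi \<tau>, (\<lambda>t. A (t + \<tau>), \<lambda>t. f (t + \<tau>))) | \<tau>. \<tau> \<ge> 0} \<subseteq> Cbox r Q \<times> UNIV"
    by auto
  from cond_compact_closure_of_prod[OF compactin_Cbox[OF Q] closedin_Cbox[OF Q] this]
  show ?thesis
    by (simp add: Hplus_def Xtop_def Ytop_def)
qed

end
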